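(* Let $P$ be a free $\mathbb{Z}_2$-poset, where $\mathbb{Z}_2=\{+1,-1\}$. The compatibility graph $C_P$ is triangle-free if and only if there are no $x,y\in P$ such that $x\preceq y$ and $x\preceq -y$.
   Context: A $\mathbb{Z}_2$-poset is a poset $(P,\preceq)$ with an action of $\mathbb{Z}_2=\{+1,-1\}$ preserving the order ($x\preceq y\Rightarrow -x\preceq -y$); it is free if $-x\neq x$ for all $x$. The compatibility graph $C_P$ of a $G$-poset $P$ is the simple graph with vertex set $P$ in which distinct $x,y$ are adjacent if there is $g\in G\setminus\{e\}$ such that $x$ and $g\cdot y$ are comparable in $P$; for $G=\mathbb{Z}_2$ this means $x$ and $-y$ are comparable. *)

theory Defs
  imports Main
begin

text \<open>A poset is given by a carrier set P and an order relation le on P.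
A Z2-action is given by the action of the generator -1, an involution neg.\<close>

definition poset_on :: "'a set \<Rightarrow> ('a \<Rightarrow> 'a \<Rightarrow> bool) \<Rightarrow> bool" where
  "poset_on P le \<longleftrightarrow>
     (\<forall>x\<in>P. le x x) \<and>
     (\<forall>x\<in>P. \<forall>y\<in>P. le x y \<and> le y x \<longrightarrow> x = y) \<and>
     (\<forall>x\<in>P. \<forall>y\<in>P. \<forall>z\<in>P. le x y \<and> le y z \<longrightarrow> le x z)"

definition Z2_poset :: "'a set \<Rightarrow> ('a \<Rightarrow> 'a \<Rightarrow> bool) \<Rightarrow> ('a \<Rightarrow> 'a) \<Rightarrow> bool" where
  "Z2_poset P le neg \<longleftrightarrow>
     poset_on P le \<and>
     (\<forall>x\<in>P. neg x \<in> P) \<and>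
     (\<forall>x\<in>P. neg (neg x) = x) \<and>
     (\<forall>x\<in>P. \<forall>y\<in>P. le x y \<longrightarrow> le (neg x) (neg y))"

definition free_Z2_poset :: "'a set \<Rightarrow> ('a \<Rightarrow> 'a \<Rightarrow> bool) \<Rightarrow> ('a \<Rightarrow> 'a) \<Rightarrow> bool" where
  "free_Z2_poset P le neg \<longleftrightarrow> Z2_poset P le neg \<and> (\<forall>x\<in>P. neg x \<noteq> x)"

definition comparable :: "('a \<Rightarrow> 'a \<Rightarrow> bool) \<Rightarrow> 'a \<Rightarrow> 'a \<Rightarrow> bool" where
  "comparable le x y \<longleftrightarrow> le x y \<or> le y x"

text \<open>Edge relation of the compatibility graph C_P (vertex set P): distinct x, y are
adjacent iff x and g y are comparable for some non-identity g, i.e. g = -1.\<close>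
definition compat_adj :: "'a set \<Rightarrow> ('a \<Rightarrow> 'a \<Rightarrow> bool) \<Rightarrow> ('a \<Rightarrow> 'a) \<Rightarrow> 'a \<Rightarrow> 'a \<Rightarrow> bool" where
  "compat_adj P le neg x y \<longleftrightarrow> x \<in> P \<and> y \<in> P \<and> x \<noteq> y \<and> comparable le x (neg y)"

definition triangle_free :: "'a set \<Rightarrow> ('a \<Rightarrow> 'a \<Rightarrow> bool) \<Rightarrow> bool" where
  "triangle_free V E \<longleftrightarrow>
     \<not> (\<exists>x\<in>V. \<exists>y\<in>V. \<exists>z\<in>V. E x y \<and> E y z \<and> E x z)"

end

theory Submission
  imports Defs
begin

text \<open>In a free \<open>\<int>\<^sub>2\<close>-poset no \<open>x\<close> lies below \<open>-x\<close>, and \<open>x \<preceq> -y\<close> is equivalent to \<open>-x \<preceq> y\<close>.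
If \<open>x \<preceq> y\<close> and \<open>x \<preceq> -y\<close>, then \<open>x, y, -y\<close> is a triangle of \<open>C\<^sub>P\<close>. Conversely, orient each edge
\<open>{u, v}\<close> of a triangle as \<open>u \<rightarrow> v\<close> when \<open>u \<preceq> -v\<close>; some vertex has an incoming and an outgoing
edge, \<open>u \<rightarrow> v \<rightarrow> w\<close>, whence \<open>u \<preceq> -v \<preceq> w\<close>. The edge between \<open>u\<close> and \<open>w\<close> then gives either
\<open>u \<preceq> w\<close> and \<open>u \<preceq> -w\<close>, or \<open>u \<preceq> w \<preceq> -u\<close>.\<close>

lemma three_cycle_has_directed_path:
  assumes "R a b \<or> R b a" and "R b c \<or> R c b" and "R a c \<or> R c a"
  shows "\<exists>u\<in>{a, b, c}. \<exists>v\<in>{a, b, c}. \<exists>w\<in>{a, b, c}. R u v \<and> R v w \<and> (R u w \<or> R w u)"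
  using assms by blast

locale poset_with_involution =
  fixes P :: "'a set" and le :: "'a \<Rightarrow> 'a \<Rightarrow> bool" and neg :: "'a \<Rightarrow> 'a"
  assumes Z2_poset: "Z2_poset P le neg"
begin

lemma le_refl: "x \<in> P \<Longrightarrow> le x x"
  and le_antisym: "x \<in> P \<Longrightarrow> y \<in> P \<Longrightarrow> le x y \<Longrightarrow> le y x \<Longrightarrow> x = y"
  and le_trans: "x \<in> P \<Longrightarrow> y \<in> P \<Longrightarrow> z \<in> P \<Longrightarrow> le x y \<Longrightarrow> le y z \<Longrightarrow> le x z"
  and neg_closed: "x \<in> P \<Longrightarrow> neg x \<in> P"
  and neg_neg: "x \<in> P \<Longrightarrow> neg (neg x) = x"
  and neg_mono: "x \<in> P \<Longrightarrow> y \<in> P \<Longrightarrow> le x y \<Longrightarrow> le (neg x) (neg y)"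
  using Z2_poset unfolding Z2_poset_def poset_on_def by blast+

lemma le_neg_iff_neg_le: "x \<in> P \<Longrightarrow> y \<in> P \<Longrightarrow> le x (neg y) \<longleftrightarrow> le (neg x) y"
  by (metis neg_mono neg_closed neg_neg)

lemma neg_le_iff_le_neg: "x \<in> P \<Longrightarrow> y \<in> P \<Longrightarrow> le (neg y) x \<longleftrightarrow> le y (neg x)"
  by (metis neg_mono neg_closed neg_neg)

lemma compat_adj_iff:
  "compat_adj P le neg x y \<longleftrightarrow>
     x \<in> P \<and> y \<in> P \<and> x \<noteq> y \<and> (le x (neg y) \<or> le y (neg x))"
  unfolding compat_adj_def comparable_def using neg_le_iff_le_neg by blast

end

locale free_poset_with_involution = poset_with_involution +
  assumes neg_neq: "x \<in> P \<Longrightarrow> neg x \<noteq> x"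
begin

lemma not_le_neg_self:
  assumes "x \<in> P"
  shows "\<not> le x (neg x)"
proof
  assume "le x (neg x)"
  moreover from this have "le (neg x) x"
    using assms le_neg_iff_neg_le by blast
  ultimately show False
    using assms le_antisym neg_closed neg_neq by metis
qed

lemma triangle_of_le_both:
  assumes "x \<in> P" "y \<in> P" "le x y" "le x (neg y)"
  shows "\<not> triangle_free P (compat_adj P le neg)"
proof -
  have "x \<noteq> y" and "x \<noteq> neg y"
    using assms not_le_neg_self neg_neg neg_closed by metis+
  moreover have "y \<noteq> neg y"
    using assms neg_neq by metis
  ultimately have "compat_adj P le neg x y" "compat_adj P le neg y (neg y)"
    "compat_adj P le neg x (neg y)"
    using assms by (auto simp: compat_adj_iff neg_closed neg_neg le_refl)
  then show ?thesis
    unfolding triangle_free_def using assms neg_closed by blast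
qed

lemma no_le_neg_path:
  assumes no_le_both: "\<not> (\<exists>x\<in>P. \<exists>y\<in>P. le x y \<and> le x (neg y))"
    and P: "u \<in> P" "v \<in> P" "w \<in> P"
    and uv: "le u (neg v)" and vw: "le v (neg w)"
  shows "\<not> (le u (neg w) \<or> le w (neg u))"
proof -
  have "le (neg v) w"
    using vw P le_neg_iff_neg_le by blast
  with uv P have uw: "le u w"
    using le_trans neg_closed by blast
  then have "\<not> le u (neg w)"
    using no_le_both P by blast
  moreover have "\<not> le w (neg u)"
    using uw P le_trans neg_closed not_le_neg_self by blast
  ultimately show ?thesis
    by blast
qed

lemma triangle_free_if_no_le_both:
  assumes "\<not> (\<exists>x\<in>P. \<exists>y\<in>P. le x y \<and> le x (neg y))"
  shows "triangle_free P (compat_adj P le neg)"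
  unfolding triangle_free_def
proof clarify
  fix a b c
  assume abc: "a \<in> P" "b \<in> P" "c \<in> P" and edges: "compat_adj P le neg a b"
    "compat_adj P le neg b c" "compat_adj P le neg a c"
  let ?R = "\<lambda>u v. le u (neg v)"
  from edges have "?R a b \<or> ?R b a" "?R b c \<or> ?R c b" "?R a c \<or> ?R c a"
    by (simp_all add: compat_adj_iff)
  then obtain u v w where "u \<in> {a, b, c}" "v \<in> {a, b, c}" "w \<in> {a, b, c}"
    and "?R u v" "?R v w" "?R u w \<or> ?R w u"
    using three_cycle_has_directed_path[of ?R a b c] by blast
  then show False
    using no_le_neg_path[OF assms] abc by blast
qed

end

theorem lemma19:
  fixes P :: "'a set" and le :: "'a \<Rightarrow> 'a \<Rightarrow> bool" and neg :: "'a \<Rightarrow> 'a"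
  assumes "free_Z2_poset P le neg"
  shows "triangle_free P (compat_adj P le neg) \<longleftrightarrow>
         \<not> (\<exists>x\<in>P. \<exists>y\<in>P. le x y \<and> le x (neg y))"
proof -
  interpret free_poset_with_involution P le neg
    using assms by unfold_locales (auto simp: free_Z2_poset_def)
  show ?thesis
    using triangle_of_le_both triangle_free_if_no_le_both by blast
qed

end
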